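(* Let $(X,\phi)$ be a uniformly Lipschitz flow on a compact metric space $(X,d)$, let $L=L(1)$, and let $\mu\in\mathcal{M}(X)$. Then for every $\delta\in(0,1)$ and every $\epsilon>0$, \begin{align*} \overline{h}^K_\mu(\epsilon,\delta,\phi_1)\le\overline{h}^K_\mu(\epsilon,\delta,\phi)\le\overline{h}^K_\mu(\epsilon/L,\delta,\phi_1),\\ \underline{h}^K_\mu(\epsilon,\delta,\phi_1)\le\underline{h}^K_\mu(\epsilon,\delta,\phi)\le\underline{h}^K_\mu(\epsilon/L,\delta,\phi_1). \end{align*}
   Context: A flow: $\phi:X\times\mathbb{R}\to X$ continuous, $\phi_t(x)=\phi(x,t)$, $\phi_0=\mathrm{id}$, $\phi_{t+s}=\phi_t\circ\phi_s$. Uniformly Lipschitz: for every $t_0>0$ there is $L(t_0)>0$ such that for all $\epsilon>0$ and $x,y\in X$, $d(x,y)\le\epsilon/L(t_0)$ implies $d(\phi_sx,\phi_sy)<\epsilon$ for all $s\in[0,t_0]$. $\mathcal{M}(X)$: Borel probability measures on $X$. Balls: $B_t(x,\epsilon,\phi)=\{y:d(\phi_sx,\phi_sy)<\epsilon\ \forall s\in[0,t]\}$, $B_n(x,\epsilon,\phi_1)=\{y:d(\phi_jx,\phi_jy)<\epsilon,\ j=0,\dots,n-1\}$. Katok entropies: $R^\delta_\mu(t,\epsilon,\phi)=\min\{\#E:E\subset X,\ \mu(\bigcup_{x\in E}B_t(x,\epsilon,\phi))>\delta\}$, $\overline{h}^K_\mu(\epsilon,\delta,\phi)=\limsup_{t\to\infty}\frac1t\log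 R^\delta_\mu(t,\epsilon,\phi)$, $\underline{h}^K_\mu(\epsilon,\delta,\phi)=\liminf_{t\to\infty}\frac1t\log R^\delta_\mu(t,\epsilon,\phi)$; $R^\delta_\mu(n,\epsilon,\phi_1)$, $\overline{h}^K_\mu(\epsilon,\delta,\phi_1)$, $\underline{h}^K_\mu(\epsilon,\delta,\phi_1)$ are defined in the same way using $B_n(x,\epsilon,\phi_1)$ and $n\in\mathbb{N}$, $n\to\infty$. *)

theory Defs
  imports "HOL-Probability.Probability"
begin

definition is_flow :: "('a::metric_space \<Rightarrow> real \<Rightarrow> 'a) \<Rightarrow> bool" where
  "is_flow phi \<longleftrightarrow>
     continuous_on UNIV (\<lambda>p. phi (fst p) (snd p)) \<and>
     (\<forall>x. phi x 0 = x) \<and>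
     (\<forall>x t s. phi x (t + s) = phi (phi x s) t)"

definition lip_const :: "('a::metric_space \<Rightarrow> real \<Rightarrow> 'a) \<Rightarrow> real \<Rightarrow> real \<Rightarrow> bool" where
  "lip_const phi t0 L \<longleftrightarrow> L > 0 \<and>
     (\<forall>eps>0. \<forall>x y. dist x y \<le> eps / L \<longrightarrow>
        (\<forall>s\<in>{0..t0}. dist (phi x s) (phi y s) < eps))"

definition unif_lipschitz_flow :: "('a::metric_space \<Rightarrow> real \<Rightarrow> 'a) \<Rightarrow> bool" where
  "unif_lipschitz_flow phi \<longleftrightarrow> (\<forall>t0>0. \<exists>L. lip_const phi t0 L)"

definition bowen_ball_flow :: "('a::metric_space \<Rightarrow> real \<Rightarrow> 'a) \<Rightarrow> real \<Rightarrow> 'a \<Rightarrow> real \<Rightarrow> 'a set" where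
  "bowen_ball_flow phi t x eps = {y. \<forall>s\<in>{0..t}. dist (phi x s) (phi y s) < eps}"

definition bowen_ball_map :: "('a::metric_space \<Rightarrow> 'a) \<Rightarrow> nat \<Rightarrow> 'a \<Rightarrow> real \<Rightarrow> 'a set" where
  "bowen_ball_map f n x eps = {y. \<forall>j<n. dist ((f ^^ j) x) ((f ^^ j) y) < eps}"

definition katok_R_flow :: "'a measure \<Rightarrow> ('a::metric_space \<Rightarrow> real \<Rightarrow> 'a) \<Rightarrow> real \<Rightarrow> real \<Rightarrow> real \<Rightarrow> nat" where
  "katok_R_flow M phi delta t eps =
     Inf {card E | E. finite E \<and> measure M (\<Union>x\<in>E. bowen_ball_flow phi t x eps) > delta}"

definition katok_R_map :: "'a measure \<Rightarrow> ('a::metric_space \<Rightarrow> 'a) \<Rightarrow> real \<Rightarrow> nat \<Rightarrow> real \<Rightarrow> nat" where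
  "katok_R_map M f delta n eps =
     Inf {card E | E. finite E \<and> measure M (\<Union>x\<in>E. bowen_ball_map f n x eps) > delta}"

definition upper_katok_flow :: "'a measure \<Rightarrow> ('a::metric_space \<Rightarrow> real \<Rightarrow> 'a) \<Rightarrow> real \<Rightarrow> real \<Rightarrow> ereal" where
  "upper_katok_flow M phi eps delta =
     Limsup at_top (\<lambda>t. ereal (ln (real (katok_R_flow M phi delta t eps)) / t))"

definition lower_katok_flow :: "'a measure \<Rightarrow> ('a::metric_space \<Rightarrow> real \<Rightarrow> 'a) \<Rightarrow> real \<Rightarrow> real \<Rightarrow> ereal" where
  "lower_katok_flow M phi eps delta =
     Liminf at_top (\<lambda>t. ereal (ln (real (katok_R_flow M phi delta t eps)) / t))"

definition upper_katok_map :: "'a measure \<Rightarrow> ('a::metric_space \<Rightarrow> 'a) \<Rightarrow> real \<Rightarrow> real \<Rightarrow> ereal" where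
  "upper_katok_map M f eps delta =
     limsup (\<lambda>n. ereal (ln (real (katok_R_map M f delta n eps)) / real n))"

definition lower_katok_map :: "'a measure \<Rightarrow> ('a::metric_space \<Rightarrow> 'a) \<Rightarrow> real \<Rightarrow> real \<Rightarrow> ereal" where
  "lower_katok_map M f eps delta =
     liminf (\<lambda>n. ereal (ln (real (katok_R_map M f delta n eps)) / real n))"

end

theory Submission
  imports Defs
begin

(* Sampling an orbit of the flow at the integer times 0, ..., n - 1 shows that the flow Bowen
   ball B_t(x, eps) lies in the time-one Bowen ball B_n(x, eps) whenever n <= t + 1.  Conversely,
   if two orbits are eps/L-close at the integer times below n >= t, the Lipschitz constant
   L = L(1) keeps them eps-close on each unit interval in between, so B_n(x, eps/L) lies in
   B_t(x, eps).  Bowen balls are open, hence measurable, and by compactness finitely many of them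
   cover the space, so the Katok numbers compare:
   R(n, eps, phi_1) <= R(t, eps, phi) <= R(n, eps/L, phi_1) for t <= n <= t + 1.
   Dividing their logarithms by t and by n, whose ratio tends to 1, compares the growth rates. *)

lemma Limsup_compose_filterlim_le:
  fixes g :: "'b \<Rightarrow> 'c::complete_lattice"
  assumes "filterlim N G F"
  shows "Limsup F (\<lambda>x. g (N x)) \<le> Limsup G g"
  unfolding Limsup_def
proof (rule INF_mono)
  fix P assume "P \<in> {P. eventually P G}"
  then have "eventually (\<lambda>x. P (N x)) F"
    using assms by (auto simp: filterlim_iff)
  then show "\<exists>Q\<in>{P. eventually P F}. (SUP x\<in>Collect Q. g (N x)) \<le> (SUP x\<in>Collect P. g x)"
    by (intro bexI[of _ "\<lambda>x. P (N x)"]) (auto intro!: SUP_mono)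
qed

lemma Liminf_compose_filterlim_ge:
  fixes g :: "'b \<Rightarrow> 'c::complete_lattice"
  assumes "filterlim N G F"
  shows "Liminf G g \<le> Liminf F (\<lambda>x. g (N x))"
  unfolding Liminf_def
proof (rule SUP_mono)
  fix P assume "P \<in> {P. eventually P G}"
  then have "eventually (\<lambda>x. P (N x)) F"
    using assms by (auto simp: filterlim_iff)
  then show "\<exists>Q\<in>{P. eventually P F}. (INF x\<in>Collect P. g x) \<le> (INF x\<in>Collect Q. g (N x))"
    by (intro bexI[of _ "\<lambda>x. P (N x)"]) (auto intro!: INF_mono)
qed

lemma filterlim_nat_floor_sequentially:
  "filterlim (\<lambda>t. nat \<lfloor>t\<rfloor>) sequentially (at_top :: real filter)"
  unfolding filterlim_at_top eventually_at_top_linorder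
  by (metis le_nat_floor order.refl)

lemma limsup_div_nat_le_Limsup_div_real:
  fixes a :: "real \<Rightarrow> real" and b :: "nat \<Rightarrow> real"
  assumes "\<And>t n. 1 \<le> t \<Longrightarrow> t \<le> real n \<Longrightarrow> real n \<le> t + 1 \<Longrightarrow> b n \<le> a t"
  shows "limsup (\<lambda>n. ereal (b n / real n)) \<le> Limsup at_top (\<lambda>t. ereal (a t / t))"
proof -
  have "limsup (\<lambda>n. ereal (b n / real n)) \<le> limsup (\<lambda>n. ereal (a (real n) / real n))"
    using assms
    by (intro Limsup_mono) (auto simp: eventually_sequentially intro!: divide_right_mono exI[of _ 1])
  also have "\<dots> \<le> Limsup at_top (\<lambda>t. ereal (a t / t))"
    using Limsup_compose_filterlim_le[OF filterlim_real_sequentially] .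
  finally show ?thesis .
qed

lemma Liminf_div_real_le_liminf_div_nat:
  fixes a :: "real \<Rightarrow> real" and b :: "nat \<Rightarrow> real"
  assumes "\<And>t n. 1 \<le> t \<Longrightarrow> t \<le> real n \<Longrightarrow> real n \<le> t + 1 \<Longrightarrow> a t \<le> b n"
  shows "Liminf at_top (\<lambda>t. ereal (a t / t)) \<le> liminf (\<lambda>n. ereal (b n / real n))"
proof -
  have "Liminf at_top (\<lambda>t. ereal (a t / t)) \<le> liminf (\<lambda>n. ereal (a (real n) / real n))"
    using Liminf_compose_filterlim_ge[OF filterlim_real_sequentially] .
  also have "\<dots> \<le> liminf (\<lambda>n. ereal (b n / real n))"
    using assms
    by (intro Liminf_mono) (auto simp: eventually_sequentially intro!: divide_right_mono exI[of _ 1])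
  finally show ?thesis .
qed

lemma liminf_div_nat_le_Liminf_div_real:
  fixes a :: "real \<Rightarrow> real" and b :: "nat \<Rightarrow> real"
  assumes b_nonneg: "\<And>n. 0 \<le> b n"
    and le: "\<And>t n. 1 \<le> t \<Longrightarrow> t \<le> real n \<Longrightarrow> real n \<le> t + 1 \<Longrightarrow> b n \<le> a t"
  shows "liminf (\<lambda>n. ereal (b n / real n)) \<le> Liminf at_top (\<lambda>t. ereal (a t / t))"
proof -
  let ?c = "\<lambda>m. ereal (b (Suc m) / real (Suc m))"
  have "liminf (\<lambda>n. ereal (b n / real n)) \<le> liminf ?c"
    by (rule Liminf_compose_filterlim_ge[OF filterlim_Suc])
  also have "\<dots> \<le> Liminf at_top (\<lambda>t::real. ?c (nat \<lfloor>t\<rfloor>))"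
    by (rule Liminf_compose_filterlim_ge[OF filterlim_nat_floor_sequentially])
  also have "\<dots> \<le> Liminf at_top (\<lambda>t. ereal (a t / t))"
  proof (intro Liminf_mono eventually_at_top_linorder[THEN iffD2] exI allI impI)
    fix t :: real assume "1 \<le> t"
    moreover have "t \<le> real (Suc (nat \<lfloor>t\<rfloor>))" "real (Suc (nat \<lfloor>t\<rfloor>)) \<le> t + 1"
      using \<open>1 \<le> t\<close> by linarith+
    ultimately have "b (Suc (nat \<lfloor>t\<rfloor>)) / real (Suc (nat \<lfloor>t\<rfloor>)) \<le> b (Suc (nat \<lfloor>t\<rfloor>)) / t"
      "b (Suc (nat \<lfloor>t\<rfloor>)) / t \<le> a t / t"
      using b_nonneg le by (auto intro!: divide_left_mono divide_right_mono)
    then show "?c (nat \<lfloor>t\<rfloor>) \<le> ereal (a t / t)" by simp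
  qed
  finally show ?thesis .
qed

(* Here only a t / t <= b n / t is available, which exceeds b n / n since t <= n; with
   n = m + 1, m = floor t, the excess is at most the factor (m + 1) / m, which tends to 1. *)
lemma Limsup_div_real_le_limsup_div_nat:
  fixes a :: "real \<Rightarrow> real" and b :: "nat \<Rightarrow> real"
  assumes b_nonneg: "\<And>n. 0 \<le> b n"
    and le: "\<And>t n. 1 \<le> t \<Longrightarrow> t \<le> real n \<Longrightarrow> real n \<le> t + 1 \<Longrightarrow> a t \<le> b n"
  shows "Limsup at_top (\<lambda>t. ereal (a t / t)) \<le> limsup (\<lambda>n. ereal (b n / real n))"
proof -
  let ?u = "\<lambda>m. ereal (real (Suc m) / real m)" and ?c = "\<lambda>m. ereal (b (Suc m) / real (Suc m))"
  have "Limsup at_top (\<lambda>t. ereal (a t / t))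
      \<le> Limsup at_top (\<lambda>t::real. ?u (nat \<lfloor>t\<rfloor>) * ?c (nat \<lfloor>t\<rfloor>))"
  proof (intro Limsup_mono eventually_at_top_linorder[THEN iffD2] exI allI impI)
    fix t :: real assume "1 \<le> t"
    define m where "m = nat \<lfloor>t\<rfloor>"
    have m: "1 \<le> real m" "real m \<le> t" "t \<le> real (Suc m)" "real (Suc m) \<le> t + 1"
      using \<open>1 \<le> t\<close> by (simp_all add: m_def) linarith+
    then have "a t / t \<le> b (Suc m) / t"
      using le by (intro divide_right_mono) auto
    also have "\<dots> \<le> b (Suc m) / real m"
      using m b_nonneg by (intro divide_left_mono) auto
    also have "\<dots> = real (Suc m) / real m * (b (Suc m) / real (Suc m))"
      by simp
    finally show "ereal (a t / t) \<le> ?u (nat \<lfloor>t\<rfloor>) * ?c (nat \<lfloor>t\<rfloor>)"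
      unfolding m_def by simp
  qed
  also have "\<dots> \<le> limsup (\<lambda>m. ?u m * ?c m)"
    by (rule Limsup_compose_filterlim_le[OF filterlim_nat_floor_sequentially])
  also have "\<dots> = limsup ?c"
  proof -
    have "?u \<longlonglongrightarrow> 1"
      using tendsto_ereal[OF LIMSEQ_Suc_n_over_n] by (simp add: one_ereal_def)
    from ereal_limsup_lim_mult[OF this, of ?c] show ?thesis
      by simp
  qed
  also have "\<dots> \<le> limsup (\<lambda>n. ereal (b n / real n))"
    by (rule Limsup_compose_filterlim_le[OF filterlim_Suc])
  finally show ?thesis .
qed

lemma ln_of_nat_nonneg: "0 \<le> ln (real n)"
  by (cases "n = 0") auto

lemma ln_of_nat_mono: "m \<le> n \<Longrightarrow> ln (real m) \<le> ln (real n)"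
  by (cases "m = 0") (auto simp: ln_of_nat_nonneg)

(* The last hypothesis matters: Inf {} = 0 for nat. *)
lemma Inf_card_cover_mono:
  fixes A B :: "'b \<Rightarrow> 'a set"
  assumes "finite_measure M" and "\<And>x. A x \<subseteq> B x" and "\<And>x. B x \<in> sets M"
    and "\<exists>E. finite E \<and> d < measure M (\<Union>x\<in>E. A x)"
  shows "Inf {card E |E. finite E \<and> d < measure M (\<Union>x\<in>E. B x)}
       \<le> Inf {card E |E. finite E \<and> d < measure M (\<Union>x\<in>E. A x)}"
proof -
  let ?S = "{card E |E. finite E \<and> d < measure M (\<Union>x\<in>E. A x)}"
  have "Inf ?S \<in> ?S"
    using assms(4) by (intro Inf_nat_def1) blast
  then obtain E where E: "Inf ?S = card E" "finite E" "d < measure M (\<Union>x\<in>E. A x)"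
    by blast
  moreover have "measure M (\<Union>x\<in>E. A x) \<le> measure M (\<Union>x\<in>E. B x)"
    using E(2) assms(2,3) by (intro finite_measure.finite_measure_mono[OF assms(1)] UN_mono) auto
  ultimately show ?thesis
    by (intro cInf_lower bdd_belowI[of _ 0]) force+
qed

lemma is_flow_add: "is_flow phi \<Longrightarrow> phi x (t + s) = phi (phi x s) t"
  by (simp add: is_flow_def)

lemma is_flow_funpow: "is_flow phi \<Longrightarrow> ((\<lambda>x. phi x 1) ^^ j) x = phi x (real j)"
  by (induction j) (auto simp: is_flow_def add.commute)

lemma is_flow_continuous_on_compose:
  assumes "is_flow phi" and "continuous_on S f" and "continuous_on S g"
  shows "continuous_on S (\<lambda>z. phi (f z) (g z))"
proof -
  have "continuous_on UNIV (\<lambda>p. phi (fst p) (snd p))"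
    using assms(1) by (simp add: is_flow_def)
  from continuous_on_compose2[OF this continuous_on_Pair[OF assms(2,3)]] show ?thesis
    by simp
qed

lemma lip_const_pos: "lip_const phi t0 L \<Longrightarrow> 0 < L"
  by (simp add: lip_const_def)

lemma lip_constD:
  "lip_const phi t0 L \<Longrightarrow> 0 < e \<Longrightarrow> dist x y \<le> e / L \<Longrightarrow> s \<in> {0..t0} \<Longrightarrow>
    dist (phi x s) (phi y s) < e"
  by (simp add: lip_const_def)

lemma bowen_ball_map_time_one:
  "is_flow phi \<Longrightarrow>
    bowen_ball_map (\<lambda>x. phi x 1) n x e = {y. \<forall>j<n. dist (phi x (real j)) (phi y (real j)) < e}"
  by (simp add: bowen_ball_map_def is_flow_funpow)

lemma open_bowen_ball_map_time_one:
  assumes "is_flow phi"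
  shows "open (bowen_ball_map (\<lambda>x. phi x 1) n x e)"
proof -
  have "bowen_ball_map (\<lambda>x. phi x 1) n x e
      = (\<Inter>j<n. {y. dist (phi x (real j)) (phi y (real j)) < e})"
    by (auto simp: bowen_ball_map_time_one[OF assms])
  moreover have "open {y. dist (phi x (real j)) (phi y (real j)) < e}" for j
    using is_flow_continuous_on_compose[OF assms continuous_on_id continuous_on_const]
    by (intro open_Collect_less continuous_on_dist continuous_on_const)
  ultimately show ?thesis
    by auto
qed

lemma cball_subset_bowen_ball_flow:
  assumes "lip_const phi t0 L" and "t \<le> t0" and "0 < e"
  shows "cball x (e / L) \<subseteq> bowen_ball_flow phi t x e"
  using lip_constD[OF assms(1,3)] assms(2) by (auto simp: bowen_ball_flow_def)

lemma open_bowen_ball_flow: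
  assumes flow: "is_flow phi" and lipschitz: "unif_lipschitz_flow phi"
  shows "open (bowen_ball_flow phi t x e)"
  unfolding open_contains_ball
proof
  fix y assume y: "y \<in> bowen_ball_flow phi t x e"
  show "\<exists>r>0. ball y r \<subseteq> bowen_ball_flow phi t x e"
  proof (cases "t < 0")
    case True
    then show ?thesis by (auto simp: bowen_ball_flow_def intro: exI[of _ 1])
  next
    case False
    obtain L where L: "lip_const phi (max t 1) L"
      using lipschitz unfolding unif_lipschitz_flow_def by fastforce
    have "continuous_on {0..t} (\<lambda>s. dist (phi x s) (phi y s))"
      using is_flow_continuous_on_compose[OF flow continuous_on_const continuous_on_id]
      by (intro continuous_on_dist)
    moreover have "{0..t} \<noteq> {}"
      using False by simp
    ultimately obtain s0 where "s0 \<in> {0..t}"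
      and s0_max: "\<And>s. s \<in> {0..t} \<Longrightarrow> dist (phi x s) (phi y s) \<le> dist (phi x s0) (phi y s0)"
      using continuous_attains_sup[OF compact_Icc] by blast
    define m where "m = dist (phi x s0) (phi y s0)"
    have "m < e"
      using y \<open>s0 \<in> {0..t}\<close> by (auto simp: m_def bowen_ball_flow_def)
    have "ball y ((e - m) / L) \<subseteq> bowen_ball_flow phi t x e"
    proof (clarsimp simp: bowen_ball_flow_def)
      fix z s assume "dist y z < (e - m) / L" and s: "0 \<le> s" "s \<le> t"
      then have "dist (phi y s) (phi z s) < e - m"
        using \<open>m < e\<close> by (intro lip_constD[OF L]) auto
      moreover have "dist (phi x s) (phi y s) \<le> m"
        using s0_max s by (simp add: m_def)
      ultimately show "dist (phi x s) (phi z s) < e"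
        using dist_triangle[of "phi x s" "phi z s" "phi y s"] by linarith
    qed
    moreover have "0 < (e - m) / L"
      using \<open>m < e\<close> lip_const_pos[OF L] by simp
    ultimately show ?thesis by blast
  qed
qed

lemma finite_bowen_ball_flow_cover:
  assumes "compact (UNIV :: 'a::metric_space set)"
    and "unif_lipschitz_flow (phi :: 'a \<Rightarrow> real \<Rightarrow> 'a)" and "0 < e"
  obtains E where "finite E" and "(\<Union>x\<in>E. bowen_ball_flow phi t x e) = UNIV"
proof -
  obtain L where L: "lip_const phi (max t 1) L"
    using assms(2) unfolding unif_lipschitz_flow_def by fastforce
  have "UNIV \<subseteq> (\<Union>x\<in>UNIV. ball x (e / L))"
    using lip_const_pos[OF L] assms(3) by auto
  then obtain E :: "'a set" where "finite E" and E: "UNIV \<subseteq> (\<Union>x\<in>E. ball x (e / L))"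
    by (rule compactE_image[OF assms(1) open_ball]) blast
  have "ball x (e / L) \<subseteq> bowen_ball_flow phi t x e" for x
    using cball_subset_bowen_ball_flow[OF L max.cobounded1 assms(3)]
    by (rule subset_trans[OF ball_subset_cball])
  then have "UNIV \<subseteq> (\<Union>x\<in>E. bowen_ball_flow phi t x e)"
    by (intro subset_trans[OF E] UN_mono) auto
  then show ?thesis
    by (intro that[OF \<open>finite E\<close>]) auto
qed

lemma bowen_ball_flow_subset_time_one:
  assumes "is_flow phi" and "real n \<le> t + 1"
  shows "bowen_ball_flow phi t x e \<subseteq> bowen_ball_map (\<lambda>x. phi x 1) n x e"
proof -
  have "real j \<in> {0..t}" if "j < n" for j
    using that assms(2) by auto
  then show ?thesis
    by (auto simp: bowen_ball_map_time_one[OF assms(1)] bowen_ball_flow_def)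
qed

lemma bowen_ball_time_one_subset_flow:
  assumes flow: "is_flow phi" and L: "lip_const phi 1 L" and "1 \<le> n" and "t \<le> real n"
  shows "bowen_ball_map (\<lambda>x. phi x 1) n x (e / L) \<subseteq> bowen_ball_flow phi t x e"
proof (clarsimp simp: bowen_ball_flow_def)
  fix y s assume y: "y \<in> bowen_ball_map (\<lambda>x. phi x 1) n x (e / L)" and s: "0 \<le> s" "s \<le> t"
  define j where "j = min (nat \<lfloor>s\<rfloor>) (n - 1)"
  have j: "j < n" "real j \<le> s" "s - real j \<le> 1"
    using s assms(3,4) unfolding j_def by linarith+
  have close: "dist (phi x (real j)) (phi y (real j)) < e / L"
    using y j(1) by (simp add: bowen_ball_map_time_one[OF flow])
  then have "0 < e"
    using le_less_trans[OF zero_le_dist close] lip_const_pos[OF L] by (simp add: zero_less_divide_iff)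
  have "dist (phi (phi x (real j)) (s - real j)) (phi (phi y (real j)) (s - real j)) < e"
    using close j \<open>0 < e\<close> by (intro lip_constD[OF L]) auto
  then show "dist (phi x s) (phi y s) < e"
    using is_flow_add[OF flow, of _ "s - real j" "real j"] by simp
qed

locale lipschitz_flow_borel_prob =
  fixes phi :: "'a::metric_space \<Rightarrow> real \<Rightarrow> 'a" and M :: "'a measure"
  assumes compact_space: "compact (UNIV :: 'a set)"
    and flow: "is_flow phi"
    and lipschitz: "unif_lipschitz_flow phi"
    and prob: "prob_space M"
    and sets_M: "sets M = sets borel"
begin

lemma measure_UNIV: "measure M UNIV = 1"
  using prob_space.prob_space[OF prob] sets_eq_imp_space_eq[OF sets_M] by simp

lemma finite_cover_measure_gt:
  assumes "finite E" and "(\<Union>x\<in>E. A x) = UNIV" and "delta < 1"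
  shows "\<exists>E. finite E \<and> delta < measure M (\<Union>x\<in>E. A x)"
  using assms measure_UNIV by auto

lemma katok_R_map_le_flow:
  assumes "delta < 1" and "0 < e" and "real n \<le> t + 1"
  shows "katok_R_map M (\<lambda>x. phi x 1) delta n e \<le> katok_R_flow M phi delta t e"
  unfolding katok_R_map_def katok_R_flow_def
proof (rule Inf_card_cover_mono[OF prob_space.finite_measure[OF prob]])
  show "bowen_ball_flow phi t x e \<subseteq> bowen_ball_map (\<lambda>x. phi x 1) n x e" for x
    using bowen_ball_flow_subset_time_one[OF flow assms(3)] .
  show "bowen_ball_map (\<lambda>x. phi x 1) n x e \<in> sets M" for x
    using open_bowen_ball_map_time_one[OF flow] sets_M by simp
  obtain E where "finite E" and "(\<Union>x\<in>E. bowen_ball_flow phi t x e) = UNIV"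
    using finite_bowen_ball_flow_cover[OF compact_space lipschitz assms(2)] .
  then show "\<exists>E. finite E \<and> delta < measure M (\<Union>x\<in>E. bowen_ball_flow phi t x e)"
    using assms(1) by (rule finite_cover_measure_gt)
qed

lemma katok_R_flow_le_map:
  assumes "delta < 1" and "0 < e" and L: "lip_const phi 1 L" and "1 \<le> n" and "t \<le> real n"
  shows "katok_R_flow M phi delta t e \<le> katok_R_map M (\<lambda>x. phi x 1) delta n (e / L)"
  unfolding katok_R_map_def katok_R_flow_def
proof (rule Inf_card_cover_mono[OF prob_space.finite_measure[OF prob]])
  show "bowen_ball_map (\<lambda>x. phi x 1) n x (e / L) \<subseteq> bowen_ball_flow phi t x e" for x
    using bowen_ball_time_one_subset_flow[OF flow L assms(4,5)] .
  show "bowen_ball_flow phi t x e \<in> sets M" for x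
    using open_bowen_ball_flow[OF flow lipschitz] sets_M by simp
  have "0 < e / L"
    using assms(2) lip_const_pos[OF L] by simp
  then obtain E where "finite E" and "(\<Union>x\<in>E. bowen_ball_flow phi (real n) x (e / L)) = UNIV"
    using finite_bowen_ball_flow_cover[OF compact_space lipschitz] by metis
  moreover have "bowen_ball_flow phi (real n) x (e / L) \<subseteq> bowen_ball_map (\<lambda>x. phi x 1) n x (e / L)"
    for x
    by (rule bowen_ball_flow_subset_time_one[OF flow]) simp
  ultimately have "(\<Union>x\<in>E. bowen_ball_map (\<lambda>x. phi x 1) n x (e / L)) = UNIV"
    by blast
  with \<open>finite E\<close>
  show "\<exists>E. finite E \<and> delta < measure M (\<Union>x\<in>E. bowen_ball_map (\<lambda>x. phi x 1) n x (e / L))"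
    using assms(1) by (rule finite_cover_measure_gt)
qed

end

theorem proposition3p2:
  fixes phi :: "'a::metric_space \<Rightarrow> real \<Rightarrow> 'a"
    and M :: "'a measure" and L delta eps :: real
  assumes "compact (UNIV :: 'a set)"
    and "is_flow phi"
    and "unif_lipschitz_flow phi"
    and "lip_const phi 1 L"
    and "prob_space M" and "sets M = sets borel"
    and "0 < delta" and "delta < 1" and "eps > 0"
  shows "upper_katok_map M (\<lambda>x. phi x 1) eps delta \<le> upper_katok_flow M phi eps delta
       \<and> upper_katok_flow M phi eps delta \<le> upper_katok_map M (\<lambda>x. phi x 1) (eps / L) delta
       \<and> lower_katok_map M (\<lambda>x. phi x 1) eps delta \<le> lower_katok_flow M phi eps delta
       \<and> lower_katok_flow M phi eps delta \<le> lower_katok_map M (\<lambda>x. phi x 1) (eps / L) delta"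
proof -
  interpret lipschitz_flow_borel_prob phi M
    using assms(1-3,5,6) by (simp add: lipschitz_flow_borel_prob_def)
  let ?flow = "\<lambda>t. ln (real (katok_R_flow M phi delta t eps))"
  let ?map = "\<lambda>e n. ln (real (katok_R_map M (\<lambda>x. phi x 1) delta n e))"
  have map_le_flow: "?map eps n \<le> ?flow t" if "real n \<le> t + 1" for n t
    using katok_R_map_le_flow[OF assms(8,9) that] by (rule ln_of_nat_mono)
  have flow_le_map: "?flow t \<le> ?map (eps / L) n" if "1 \<le> t" "t \<le> real n" for n t
    using that by (intro ln_of_nat_mono katok_R_flow_le_map[OF assms(8,9,4)]) auto
  show ?thesis
    unfolding upper_katok_map_def upper_katok_flow_def lower_katok_map_def lower_katok_flow_def
    using limsup_div_nat_le_Limsup_div_real[of "?map eps" ?flow]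
      Limsup_div_real_le_limsup_div_nat[of "?map (eps / L)" ?flow]
      liminf_div_nat_le_Liminf_div_real[of "?map eps" ?flow]
      Liminf_div_real_le_liminf_div_nat[of ?flow "?map (eps / L)"]
      map_le_flow flow_le_map ln_of_nat_nonneg
    by blast
qed

end
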